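(* For all $k\in\mathbb{N}$ and all indices $i\ne j$ in their respective ranges, $\lambda^{(k)}_{i,j}\ge0$ and $\mu^{(k)}_{i,j}\ge0$.
   Context: $\rho=1+\sqrt2$; $\alpha_t=\rho^{\nu(t+1)-1}+1$ ($\nu(i)$ the largest $j$ with $2^j\mid i$). For $k\in\mathbb{N}$, $n=2^k-1$, $\pi^{(k)}=[\alpha_0,\dots,\alpha_{n-1}]\in\mathbb{R}^n$, indexed $\pi^{(k)}_1,\dots,\pi^{(k)}_n$. Define $c^{(k)}\in\mathbb{R}^n$ (indexed $1,\dots,n$) by $c^{(1)}=[2(\rho-1)]$, $c^{(k+1)}=[\pi^{(k)},(1+\rho^{-k})(\rho^{k-1}+1),\rho c^{(k)}-(\rho-1-\rho^{-k})\pi^{(k)}]$. Multipliers $\lambda^{(k)}_{i,j}$, $i\in\{0,\dots,n,*\}$, $j\in\{0,\dots,n\}$: $\lambda^{(k)}_{i,j}=\bar\lambda^{(k)}_{i,j}$ for $i\ne *$ and $\lambda^{(k)}_{*,j}=\underline\lambda^{(k)}_j$, where $\underline\lambda^{(k)}=[\pi^{(k)},\rho^k]$ indexed $0,\dots,n$ (so $\underline\lambda^{(k)}_j=\alpha_j$ for $j<n$, $\underline\lambda^{(k)}_n=\rho^k$). $\bar\lambda^{(1)}$ (indices $0,1$) has $\bar\lambda^{(1)}_{0,1}=\rho$, $\bar\lambda^{(1)}_{1,0}=1$, other entries $0$. For $n=2^k-1$ and indices $0\le i,j\le 2n+1$, $\bar\lambda^{(k+1)}_{i,j}$ is the sum of: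 $\bar\lambda^{(k)}_{i,j}\mathbf 1\{0\le i,j\le n\}+\rho^2\bar\lambda^{(k)}_{i-n-1,j-n-1}\mathbf 1\{n+1\le i,j\le 2n+1\}$; $\rho\mathbf 1\{(i,j)=(n,2n+1)\}+\rho^k\mathbf 1\{(i,j)=(2n+1,n)\}$; and $\rho\pi^{(k)}_{j-n}\mathbf 1\{i=n,\ n+1\le j\le 2n\}+\rho\pi^{(k)}_{j-n}\mathbf 1\{i=2n+1,\ n+1\le j\le 2n\}$. Multipliers $\mu^{(k)}_{i,j}$, $i\in\{1,\dots,n,*\}$, $j\in\{1,\dots,n\}$: $\mu^{(k)}_{i,j}=\bar\mu^{(k)}_{i,j}$ for $i\ne*$ and $\mu^{(k)}_{*,j}=c^{(k)}_j+\mathbf 1\{j=1\}$. $\bar\mu^{(1)}_{1,1}=0$. For $1\le i,j\le 2n+1$, $\bar\mu^{(k+1)}_{i,j}$ is the sum of: $\bar\mu^{(k)}_{i,j}\mathbf 1\{1\le i,j\le n\}+\rho^2\bar\mu^{(k)}_{i-n-1,j-n-1}\mathbf 1\{n+2\le i,j\le 2n+1\}$; $\rho^k\mathbf 1\{(i,j)=(n,n+1)\}+\rho^2\mathbf 1\{(i,j)=(n+1,n+2)\}+(\rho-\rho^{-k})(\rho^{k-1}+1)\mathbf 1\{(i,j)=(2n+1,n+1)\}$; and $\big(1-\frac{\rho^k}{\rho^{k-1}+1}\big)(c^{(k)}_j-\pi^{(k)}_j)\mathbf 1\{i=n,1\le j\le n\}+\frac{\rho^k}{\rho^{k-1}+1}(c^{(k)}_j-\pi^{(k)}_j)\mathbf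 1\{i=n+1,1\le j\le n\}+\frac{\rho^k}{\rho^{k-1}+1}\pi^{(k)}_{j-n-1}\mathbf 1\{i=n,n+2\le j\le 2n+1\}+\frac{\rho}{\rho^{k-1}+1}\pi^{(k)}_{j-n-1}\mathbf 1\{i=n+1,n+2\le j\le2n+1\}+\big((\rho+1)c^{(k)}_{j-n-1}-(1+\rho^{-k})\pi^{(k)}_{j-n-1}\big)\mathbf 1\{i=2n+1,n+2\le j\le 2n+1\}$. *)

theory Defs
  imports Complex_Main "HOL-Computational_Algebra.Primes"
begin

definition rho :: real where "rho = 1 + sqrt 2"

definition nu :: "nat \<Rightarrow> nat" where "nu i = multiplicity (2::nat) i"

definition alpha :: "nat \<Rightarrow> real" where
  "alpha t = rho powi (int (nu (t + 1)) - 1) + 1"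

definition piv :: "nat \<Rightarrow> nat \<Rightarrow> real" where
  "piv k i = (if 1 \<le> i \<and> i \<le> 2^k - 1 then alpha (i - 1) else 0)"

fun cv :: "nat \<Rightarrow> nat \<Rightarrow> real" where
  "cv 0 j = 0"
| "cv (Suc k) j =
    (if k = 0 then (if j = 1 then 2 * (rho - 1) else 0)
     else (let n = 2^k - 1 in
       if 1 \<le> j \<and> j \<le> n then piv k j
       else if j = n + 1 then (1 + 1 / rho^k) * (rho^(k-1) + 1)
       else if n + 2 \<le> j \<and> j \<le> 2*n + 1
         then rho * cv k (j - n - 1) - (rho - 1 - 1 / rho^k) * piv k (j - n - 1)
       else 0))"

fun lbar :: "nat \<Rightarrow> nat \<Rightarrow> nat \<Rightarrow> real" where
  "lbar 0 i j = 0"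
| "lbar (Suc k) i j =
    (if k = 0 then (if i = 0 \<and> j = 1 then rho else if i = 1 \<and> j = 0 then 1 else 0)
     else (let n = 2^k - 1 in
       (if i \<le> n \<and> j \<le> n then lbar k i j else 0)
     + (if n + 1 \<le> i \<and> i \<le> 2*n + 1 \<and> n + 1 \<le> j \<and> j \<le> 2*n + 1
          then rho^2 * lbar k (i - n - 1) (j - n - 1) else 0)
     + (if i = n \<and> j = 2*n + 1 then rho else 0)
     + (if i = 2*n + 1 \<and> j = n then rho^k else 0)
     + (if i = n \<and> n + 1 \<le> j \<and> j \<le> 2*n then rho * piv k (j - n) else 0)
     + (if i = 2*n + 1 \<and> n + 1 \<le> j \<and> j \<le> 2*n then rho * piv k (j - n) else 0)))"

definition lunder :: "nat \<Rightarrow> nat \<Rightarrow> real" where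
  "lunder k j = (if j < 2^k - 1 then alpha j else if j = 2^k - 1 then rho^k else 0)"

text \<open>The row index * is represented by None, a numeric row i by Some i.\<close>
definition lam :: "nat \<Rightarrow> nat option \<Rightarrow> nat \<Rightarrow> real" where
  "lam k i j = (case i of None \<Rightarrow> lunder k j | Some i' \<Rightarrow> lbar k i' j)"

fun mubar :: "nat \<Rightarrow> nat \<Rightarrow> nat \<Rightarrow> real" where
  "mubar 0 i j = 0"
| "mubar (Suc k) i j =
    (if k = 0 then 0
     else (let n = 2^k - 1; q = rho^k / (rho^(k-1) + 1) in
       (if 1 \<le> i \<and> i \<le> n \<and> 1 \<le> j \<and> j \<le> n then mubar k i j else 0)
     + (if n + 2 \<le> i \<and> i \<le> 2*n + 1 \<and> n + 2 \<le> j \<and> j \<le> 2*n + 1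
          then rho^2 * mubar k (i - n - 1) (j - n - 1) else 0)
     + (if i = n \<and> j = n + 1 then rho^k else 0)
     + (if i = n + 1 \<and> j = n + 2 then rho^2 else 0)
     + (if i = 2*n + 1 \<and> j = n + 1 then (rho - 1 / rho^k) * (rho^(k-1) + 1) else 0)
     + (if i = n \<and> 1 \<le> j \<and> j \<le> n then (1 - q) * (cv k j - piv k j) else 0)
     + (if i = n + 1 \<and> 1 \<le> j \<and> j \<le> n then q * (cv k j - piv k j) else 0)
     + (if i = n \<and> n + 2 \<le> j \<and> j \<le> 2*n + 1 then q * piv k (j - n - 1) else 0)
     + (if i = n + 1 \<and> n + 2 \<le> j \<and> j \<le> 2*n + 1
          then rho / (rho^(k-1) + 1) * piv k (j - n - 1) else 0)
     + (if i = 2*n + 1 \<and> n + 2 \<le> j \<and> j \<le> 2*n + 1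
          then (rho + 1) * cv k (j - n - 1) - (1 + 1 / rho^k) * piv k (j - n - 1) else 0)))"

definition mu :: "nat \<Rightarrow> nat option \<Rightarrow> nat \<Rightarrow> real" where
  "mu k i j = (case i of None \<Rightarrow> cv k j + (if j = 1 then 1 else 0) | Some i' \<Rightarrow> mubar k i' j)"

end

theory Submission
  imports Defs
begin

text \<open>
  Apart from the entries built from \<open>c\<^sup>k - \<pi>\<^sup>k\<close>, every entry of \<open>\<lambda>\<^sup>k\<close> and \<open>\<mu>\<^sup>k\<close> is a sum
  of products of powers of \<open>\<rho>\<close> with the positive numbers \<open>\<alpha>\<^sub>t\<close>. The recursion
  \<open>c - \<pi> \<mapsto> \<rho> (c - \<pi>) + \<rho>\<^sup>-\<^sup>k \<pi>\<close> gives \<open>c\<^sup>k \<ge> \<pi>\<^sup>k\<close>. The one negative coefficient is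
  \<open>1 - q\<^sub>k\<close>, where \<open>q\<^sub>k = \<rho>\<^sup>k / (\<rho>\<^sup>k\<^sup>-\<^sup>1 + 1) \<ge> 1\<close>, in row \<open>n\<close> of \<open>\<mu>\<^sup>k\<^sup>+\<^sup>1\<close>, where it is added to
  the last row of \<open>\<mu>\<^sup>k\<close>. The induction therefore carries the stronger invariant that this
  last row stays nonnegative off the diagonal after adding \<open>(1 - q\<^sub>k)(c\<^sup>k - \<pi>\<^sup>k)\<close>. Since
  \<open>\<rho>\<^sup>2 = 2\<rho> + 1\<close>, the new slack is \<open>2\<rho> + 1\<close> times the old one plus nonnegative terms.
\<close>

lemma rho_gt_2: "rho > 2"
proof -
  have "sqrt 2 > 1" by simp
  then show ?thesis unfolding rho_def by simp
qed

lemma rho_pos: "rho > 0"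
  using rho_gt_2 by simp

lemma rho_squared: "rho^2 = 2 * rho + 1"
  unfolding rho_def by (simp add: power2_eq_square algebra_simps)

lemma inverse_rho: "1 / rho = rho - 2"
  using rho_squared rho_pos by (simp add: field_simps power2_eq_square)

lemma one_le_rho_power: "1 \<le> rho^k"
  using rho_gt_2 by (simp add: one_le_power)

lemma inverse_rho_power_le_1: "1 / rho^k \<le> 1"
  using one_le_rho_power[of k] by (simp add: divide_le_eq)

lemma alpha_pos: "alpha t > 0"
  unfolding alpha_def using rho_pos by (simp add: add_pos_pos)

lemma piv_nonneg: "0 \<le> piv k j"
  unfolding piv_def using alpha_pos by (simp add: less_imp_le)

lemma piv_eq_0: "j = 0 \<or> 2^k - 1 < j \<Longrightarrow> piv k j = 0"
  unfolding piv_def by auto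

lemma nu_power_two: "nu (2^k) = k"
  unfolding nu_def by (simp add: multiplicity_prime_power)

lemma nu_power_two_add:
  assumes "1 \<le> j" "j < 2^k"
  shows "nu (2^k + j) = nu j"
proof -
  define m where "m = multiplicity (2::nat) j"
  have "2^m dvd j" unfolding m_def by (rule multiplicity_dvd)
  have not_dvd: "\<not> 2^Suc m dvd j"
    unfolding m_def using assms(1) by (subst power_dvd_iff_le_multiplicity) auto
  have "2^m \<le> j" using \<open>2^m dvd j\<close> assms(1) by (simp add: dvd_imp_le)
  then have "(2::nat)^m < 2^k" using assms(2) by linarith
  then have "m < k" by (simp add: power_strict_increasing_iff)
  then have "2^Suc m dvd (2::nat)^k" by (intro le_imp_power_dvd) simp
  have "2^m dvd (2::nat)^k" using \<open>m < k\<close> by (intro le_imp_power_dvd) simp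
  then have "2^m dvd (2::nat)^k + j" "\<not> 2^Suc m dvd (2::nat)^k + j"
    using \<open>2^m dvd j\<close> not_dvd \<open>2^Suc m dvd 2^k\<close> by (simp_all add: dvd_add_right_iff)
  then have "multiplicity 2 (2^k + j) = m" by (intro multiplicity_eqI) auto
  then show ?thesis unfolding nu_def m_def by simp
qed

lemma index_cases_Suc:
  fixes j k :: nat
  obtains (outside) "j = 0 \<or> 2^Suc k - 1 < j"
    | (low) "1 \<le> j" "j \<le> 2^k - 1"
    | (mid) "j = 2^k"
    | (high) j' where "j = 2^k + j'" "1 \<le> j'" "j' \<le> 2^k - 1"
proof (cases "2^k < j \<and> j \<le> 2^Suc k - 1")
  case True
  then show ?thesis by (intro high[of "j - 2^k"]) auto
qed (use outside low mid in \<open>force+\<close>)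

lemma piv_Suc_low: "j \<le> 2^k - 1 \<Longrightarrow> piv (Suc k) j = piv k j"
  unfolding piv_def by auto

lemma piv_Suc_mid:
  assumes "k \<ge> 1"
  shows "piv (Suc k) (2^k) = rho^(k - 1) + 1"
proof -
  have "piv (Suc k) (2^k) = rho powi (int k - 1) + 1"
    unfolding piv_def alpha_def by (simp add: nu_power_two)
  also have "int k - 1 = int (k - 1)" using assms by simp
  finally show ?thesis by simp
qed

lemma piv_Suc_high:
  assumes "1 \<le> j" "j \<le> 2^k - 1"
  shows "piv (Suc k) (2^k + j) = piv k j"
proof -
  have "piv (Suc k) (2^k + j) = alpha (2^k + (j - 1))"
    unfolding piv_def using assms by auto
  also have "\<dots> = alpha (j - 1)"
    unfolding alpha_def using assms nu_power_two_add[of j k] by (simp add: Suc_leI)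
  finally show ?thesis unfolding piv_def using assms by simp
qed

lemma cv_eq_0:
  assumes "j = 0 \<or> 2^k - 1 < j"
  shows "cv k j = 0"
proof (cases k)
  case (Suc m)
  define n where "n = 2^m - (1::nat)"
  have "2^m = n + 1" unfolding n_def by simp
  then have "\<not> (1 \<le> j \<and> j \<le> n)" "j \<noteq> n + 1" "\<not> (n + 2 \<le> j \<and> j \<le> 2 * n + 1)"
    using assms Suc by auto
  then show ?thesis
    using assms Suc by (simp only: cv.simps Let_def n_def[symmetric] if_False) (auto simp: n_def)
qed simp

lemma cv_Suc_low: "k \<ge> 1 \<Longrightarrow> 1 \<le> j \<Longrightarrow> j \<le> 2^k - 1 \<Longrightarrow> cv (Suc k) j = piv k j"
  by (cases k) (auto simp: Let_def)

lemma cv_Suc_mid: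
  assumes "k \<ge> 1"
  shows "cv (Suc k) (2^k) = (1 + 1 / rho^k) * (rho^(k - 1) + 1)"
proof -
  have "(1::nat) \<le> 2^k" by simp
  then have "\<not> (2::nat)^k \<le> 2^k - 1" by linarith
  then show ?thesis using assms by (auto simp: Let_def)
qed

lemma cv_Suc_high:
  assumes "k \<ge> 1" "1 \<le> j" "j \<le> 2^k - 1"
  shows "cv (Suc k) (2^k + j) = rho * cv k j - (rho - 1 - 1 / rho^k) * piv k j"
proof -
  have "(1::nat) \<le> 2^k" by simp
  then show ?thesis using assms by (auto simp: Let_def)
qed

declare cv.simps(2) [simp del]

lemma piv_le_cv: "piv k j \<le> cv k j"
proof (induction k arbitrary: j)
  case 0
  then show ?case by (simp add: piv_def)
next
  case (Suc k)
  show ?case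
  proof (cases "k = 0")
    case True
    have "alpha 0 = rho - 1"
      unfolding alpha_def nu_def using inverse_rho by (simp add: power_int_minus inverse_eq_divide)
    then show ?thesis using True rho_gt_2 by (auto simp: piv_def cv.simps)
  next
    case False
    then have k: "k \<ge> 1" by simp
    show ?thesis
    proof (cases rule: index_cases_Suc[of j k])
      case outside
      then show ?thesis using cv_eq_0[of j "Suc k"] piv_eq_0[of j "Suc k"] by simp
    next
      case low
      then show ?thesis using cv_Suc_low[OF k low] piv_Suc_low[of j k] by simp
    next
      case mid
      then show ?thesis using cv_Suc_mid[OF k] piv_Suc_mid[OF k] rho_pos by (simp add: algebra_simps)
    next
      case (high j')
      have "cv (Suc k) j - piv (Suc k) j = rho * (cv k j' - piv k j') + piv k j' / rho^k"
        using cv_Suc_high[OF k high(2,3)] piv_Suc_high[OF high(2,3)] unfolding high(1)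
        by (simp add: algebra_simps)
      also have "\<dots> \<ge> 0" using rho_pos Suc.IH[of j'] piv_nonneg[of k j'] by simp
      finally show ?thesis by simp
    qed
  qed
qed

lemma if_nonneg: "(P \<Longrightarrow> (0::real) \<le> a) \<Longrightarrow> 0 \<le> (if P then a else 0)"
  by auto

lemma lbar_nonneg: "i \<noteq> j \<Longrightarrow> 0 \<le> lbar k i j"
proof (induction k arbitrary: i j)
  case 0
  then show ?case by simp
next
  case (Suc k)
  show ?case
  proof (cases "k = 0")
    case True
    then show ?thesis using rho_pos by simp
  next
    case False
    then show ?thesis
      unfolding lbar.simps Let_def if_not_P[OF False]
      using rho_pos piv_nonneg Suc
      by (intro add_nonneg_nonneg if_nonneg mult_nonneg_nonneg) auto
  qed
qed

definition split_weight :: "nat \<Rightarrow> real" where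
  "split_weight k = rho^k / (rho^(k - 1) + 1)"

lemma split_weight_ge_1:
  assumes "k \<ge> 1"
  shows "split_weight k \<ge> 1"
proof -
  have "rho^(k - 1) + 1 \<le> 2 * rho^(k - 1)" using one_le_rho_power by simp
  also have "\<dots> \<le> rho * rho^(k - 1)" using rho_gt_2 by (intro mult_right_mono) auto
  also have "\<dots> = rho^k" using assms by (cases k) auto
  finally show ?thesis
    unfolding split_weight_def using rho_pos by (simp add: le_divide_eq add_pos_nonneg)
qed

lemma split_weight_Suc: "split_weight (Suc k) = rho * rho^k / (rho^k + 1)"
  unfolding split_weight_def by simp

lemma split_weight_Suc_div_le: "split_weight (Suc k) / rho^k \<le> rho"
proof -
  have "rho^k > 0" using rho_pos by simp
  then have "split_weight (Suc k) / rho^k = rho / (rho^k + 1)"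
    unfolding split_weight_Suc by simp
  also have "\<dots> \<le> rho" using \<open>rho^k > 0\<close> rho_pos by (simp add: divide_le_eq)
  finally show ?thesis .
qed

lemma mubar_Suc:
  assumes "k \<ge> 1" and n: "n = 2^k - 1"
  shows "mubar (Suc k) i j =
       (if 1 \<le> i \<and> i \<le> n \<and> 1 \<le> j \<and> j \<le> n then mubar k i j else 0)
     + (if n + 2 \<le> i \<and> i \<le> 2*n + 1 \<and> n + 2 \<le> j \<and> j \<le> 2*n + 1
          then rho^2 * mubar k (i - n - 1) (j - n - 1) else 0)
     + (if i = n \<and> j = n + 1 then rho^k else 0)
     + (if i = n + 1 \<and> j = n + 2 then rho^2 else 0)
     + (if i = 2*n + 1 \<and> j = n + 1 then (rho - 1 / rho^k) * (rho^(k-1) + 1) else 0)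
     + (if i = n \<and> 1 \<le> j \<and> j \<le> n then (1 - split_weight k) * (cv k j - piv k j) else 0)
     + (if i = n + 1 \<and> 1 \<le> j \<and> j \<le> n then split_weight k * (cv k j - piv k j) else 0)
     + (if i = n \<and> n + 2 \<le> j \<and> j \<le> 2*n + 1 then split_weight k * piv k (j - n - 1) else 0)
     + (if i = n + 1 \<and> n + 2 \<le> j \<and> j \<le> 2*n + 1
          then rho / (rho^(k-1) + 1) * piv k (j - n - 1) else 0)
     + (if i = 2*n + 1 \<and> n + 2 \<le> j \<and> j \<le> 2*n + 1
          then (rho + 1) * cv k (j - n - 1) - (1 + 1 / rho^k) * piv k (j - n - 1) else 0)"
proof -
  have "(k = 0) = False" using assms by simp
  then show ?thesis
    by (simp only: mubar.simps(2) if_False Let_def n[symmetric] split_weight_def[symmetric])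
qed

definition last_row_slack :: "nat \<Rightarrow> nat \<Rightarrow> real" where
  "last_row_slack k j = mubar k (2^k - 1) j + (1 - split_weight k) * (cv k j - piv k j)"

lemma mubar_Suc_last_row_low:
  assumes k: "k \<ge> 1" and j: "1 \<le> j" "j \<le> 2^k - 1"
  shows "mubar (Suc k) (2^k - 1) j = last_row_slack k j"
proof -
  define n where "n = 2^k - (1::nat)"
  have "(2::nat)^k \<ge> 2" using k by (simp add: self_le_power)
  then have "n \<ge> 1" "j \<le> n" using j unfolding n_def by simp_all
  then show ?thesis
    unfolding mubar_Suc[OF k n_def] last_row_slack_def n_def[symmetric] using j(1) by simp
qed

lemma weighted_cv_minus_piv_nonneg: "0 \<le> (rho + 1) * cv k j - (1 + 1 / rho^k) * piv k j"
proof -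
  have "1 + 1 / rho^k \<le> rho + 1" using inverse_rho_power_le_1[of k] rho_gt_2 by linarith
  then have "(1 + 1 / rho^k) * piv k j \<le> (rho + 1) * piv k j"
    using piv_nonneg by (rule mult_right_mono)
  also have "\<dots> \<le> (rho + 1) * cv k j"
    using piv_le_cv rho_gt_2 by (intro mult_left_mono) auto
  finally show ?thesis by simp
qed

lemma mubar_Suc_nonneg:
  assumes k: "k \<ge> 1"
    and off_diag: "\<And>i j. i \<noteq> j \<Longrightarrow> 0 \<le> mubar k i j"
    and slack: "\<And>j. j \<noteq> 2^k - 1 \<Longrightarrow> 0 \<le> last_row_slack k j"
    and "i \<noteq> j"
  shows "0 \<le> mubar (Suc k) i j"
proof (cases "i = 2^k - 1 \<and> 1 \<le> j \<and> j \<le> 2^k - 1")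
  case True
  then show ?thesis using mubar_Suc_last_row_low[OF k] slack \<open>i \<noteq> j\<close> by auto
next
  case False
  have "1 / rho^k \<le> rho" using inverse_rho_power_le_1[of k] rho_gt_2 by linarith
  then show ?thesis
    unfolding mubar_Suc[OF k refl]
    using False off_diag \<open>i \<noteq> j\<close> split_weight_ge_1[OF k] piv_le_cv[of k j] piv_nonneg rho_pos
      weighted_cv_minus_piv_nonneg
    by (intro add_nonneg_nonneg if_nonneg mult_nonneg_nonneg divide_nonneg_nonneg) auto
qed

lemma last_row_slack_Suc_mid:
  assumes k: "k \<ge> 1"
  shows "0 \<le> last_row_slack (Suc k) (2^k)"
proof -
  define n where "n = 2^k - (1::nat)"
  define x where "x = rho^k"
  define a where "a = rho^(k - 1) + 1"
  have "x > 0" "a > 0" unfolding x_def a_def using rho_pos by (simp_all add: add_pos_nonneg)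
  have "(2::nat)^k \<ge> 2" using k by (simp add: self_le_power)
  then have n: "2^k = n + 1" "2^Suc k - 1 = 2 * n + 1" "n \<ge> 1" unfolding n_def by auto
  have mubar_mid: "mubar (Suc k) (2^Suc k - 1) (2^k) = (rho - 1 / x) * a"
    unfolding n mubar_Suc[OF k n_def] x_def a_def using n(3) by simp
  have gap_mid: "cv (Suc k) (2^k) - piv (Suc k) (2^k) = a / x"
    unfolding cv_Suc_mid[OF k] piv_Suc_mid[OF k] x_def[symmetric] a_def[symmetric]
    using \<open>x > 0\<close> by (simp add: field_simps)
  have "last_row_slack (Suc k) (2^k) = a * (rho - split_weight (Suc k) / x)"
    unfolding last_row_slack_def mubar_mid gap_mid using \<open>x > 0\<close> by (simp add: field_simps)
  then show ?thesis
    using split_weight_Suc_div_le[of k] \<open>a > 0\<close> unfolding x_def by simp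
qed

lemma last_row_slack_step:
  assumes k: "k \<ge> 1" and slack: "0 \<le> m + (1 - split_weight k) * (c - p)"
    and "p \<le> c" "0 \<le> p"
  shows "0 \<le> rho^2 * m + ((rho + 1) * c - (1 + 1 / rho^k) * p)
           + (1 - split_weight (Suc k)) * (rho * (c - p) + p / rho^k)"
proof -
  define x where "x = rho^k"
  define y where "y = rho^(k - 1)"
  define q where "q = split_weight (Suc k)"
  have "x > 0" "y > 0" unfolding x_def y_def using rho_pos by simp_all
  have "x = rho * y" unfolding x_def y_def using k by (cases k) auto
  then have "y \<le> x" using \<open>y > 0\<close> rho_gt_2 by simp
  have q_k: "split_weight k = x / (y + 1)" unfolding split_weight_def x_def y_def ..
  have q: "q = rho * x / (x + 1)" unfolding q_def split_weight_Suc x_def ..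
  have decomposition: "rho^2 * m + ((rho + 1) * c - (1 + 1 / rho^k) * p)
        + (1 - q) * (rho * (c - p) + p / rho^k)
     = (2 * rho + 1) * (m + (1 - split_weight k) * (c - p))
       + (c - p) * ((2 * rho + 1) * split_weight k - rho * q) + p * (rho - q / x)"
    unfolding rho_squared x_def[symmetric] using \<open>x > 0\<close>
    by (simp add: algebra_simps) (simp add: field_simps)
  have "x / (x + 1) \<le> x / (y + 1)"
    using \<open>x > 0\<close> \<open>y > 0\<close> \<open>y \<le> x\<close> by (intro divide_left_mono) auto
  then have "rho * (rho * (x / (x + 1))) \<le> rho * (rho * (x / (y + 1)))"
    using rho_pos by (intro mult_left_mono) auto
  then have "rho * q \<le> (2 * rho + 1) * split_weight k"
    unfolding q q_k rho_squared[symmetric] by (simp add: power2_eq_square)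
  moreover have "q / x \<le> rho" unfolding q_def x_def by (rule split_weight_Suc_div_le)
  ultimately have "0 \<le> (c - p) * ((2 * rho + 1) * split_weight k - rho * q)"
    "0 \<le> p * (rho - q / x)"
    using \<open>p \<le> c\<close> \<open>0 \<le> p\<close> by simp_all
  moreover have "0 \<le> (2 * rho + 1) * (m + (1 - split_weight k) * (c - p))"
    using slack rho_pos by simp
  ultimately show ?thesis unfolding q_def[symmetric] decomposition by linarith
qed

lemma last_row_slack_Suc_high:
  assumes k: "k \<ge> 1" and j: "1 \<le> j" "j \<le> 2^k - 1" and slack: "0 \<le> last_row_slack k j"
  shows "0 \<le> last_row_slack (Suc k) (2^k + j)"
proof -
  define n where "n = 2^k - (1::nat)"
  have "(2::nat)^k \<ge> 2" using k by (simp add: self_le_power)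
  then have n: "2^k = n + 1" "2^Suc k - 1 = 2 * n + 1" "n \<ge> 1" "j \<le> n"
    using j unfolding n_def by auto
  have "mubar (Suc k) (2^Suc k - 1) (2^k + j)
      = rho^2 * mubar k n j + ((rho + 1) * cv k j - (1 + 1 / rho^k) * piv k j)"
    unfolding n(1,2) mubar_Suc[OF k n_def] using j(1) n(3,4) by simp
  moreover have "cv (Suc k) (2^k + j) - piv (Suc k) (2^k + j)
      = rho * (cv k j - piv k j) + piv k j / rho^k"
    using cv_Suc_high[OF k j] piv_Suc_high[OF j] by (simp add: algebra_simps)
  moreover note last_row_slack_step[OF k slack[unfolded last_row_slack_def n_def[symmetric]]
      piv_le_cv piv_nonneg]
  ultimately show ?thesis unfolding last_row_slack_def by simp
qed

lemma last_row_slack_Suc_nonneg: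
  assumes k: "k \<ge> 1"
    and off_diag: "\<And>i j. i \<noteq> j \<Longrightarrow> 0 \<le> mubar (Suc k) i j"
    and slack: "\<And>j. j \<noteq> 2^k - 1 \<Longrightarrow> 0 \<le> last_row_slack k j"
    and j: "j \<noteq> 2^Suc k - 1"
  shows "0 \<le> last_row_slack (Suc k) j"
proof (cases rule: index_cases_Suc[of j k])
  case outside
  then have "cv (Suc k) j = piv (Suc k) j" by (simp add: cv_eq_0 piv_eq_0)
  then show ?thesis unfolding last_row_slack_def using off_diag j by simp
next
  case low
  then have "cv (Suc k) j = piv (Suc k) j" using cv_Suc_low[OF k] piv_Suc_low by simp
  then show ?thesis unfolding last_row_slack_def using off_diag j by simp
next
  case mid
  then show ?thesis using last_row_slack_Suc_mid[OF k] by simp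
next
  case (high j')
  have "(1::nat) \<le> 2^k" by simp
  then have "j' \<noteq> 2^k - 1" using j unfolding high(1) power_Suc by linarith
  then show ?thesis unfolding high(1) by (rule last_row_slack_Suc_high[OF k high(2,3) slack])
qed

lemma mubar_nonneg_and_last_row_slack_nonneg:
  assumes "k \<ge> 1"
  shows "(\<forall>i j. i \<noteq> j \<longrightarrow> 0 \<le> mubar k i j)
    \<and> (\<forall>j. j \<noteq> 2^k - 1 \<longrightarrow> 0 \<le> last_row_slack k j)"
  using assms
proof (induction k rule: dec_induct)
  case base
  show ?case by (auto simp: last_row_slack_def piv_def cv.simps)
next
  case (step k)
  then have "0 \<le> mubar (Suc k) i j" if "i \<noteq> j" for i j
    using mubar_Suc_nonneg that by blast
  then show ?case using last_row_slack_Suc_nonneg step by blast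
qed

theorem lemma12:
  fixes k :: nat
  assumes "k \<ge> 1"
  shows "(\<forall>i \<in> insert None (Some ` {0..(2::nat)^k - 1}). \<forall>j \<in> {0..(2::nat)^k - 1}.
            i \<noteq> Some j \<longrightarrow> lam k i j \<ge> 0)
       \<and> (\<forall>i \<in> insert None (Some ` {1..(2::nat)^k - 1}). \<forall>j \<in> {1..(2::nat)^k - 1}.
            i \<noteq> Some j \<longrightarrow> mu k i j \<ge> 0)"
proof -
  have "0 \<le> lunder k j" for j
    unfolding lunder_def using alpha_pos[of j] rho_pos by simp
  then have lam: "0 \<le> lam k i j" if "i \<noteq> Some j" for i j
    using that lbar_nonneg unfolding lam_def by (cases i) auto
  have "0 \<le> cv k j" for j
    using piv_le_cv piv_nonneg order_trans by blast
  then have mu: "0 \<le> mu k i j" if "i \<noteq> Some j" for i j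
    using that mubar_nonneg_and_last_row_slack_nonneg[OF assms] unfolding mu_def
    by (cases i) auto
  show ?thesis using lam mu by blast
qed

end
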